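(* Consider a main effect plan on $n$ runs with factors $F_1,\dots,F_m$ ($m\ge 3$) in which every level of every factor occurs, and fix $i\in\{1,\dots,m\}$. Let $\bar i=\{1,\dots,m+1\}\setminus\{i\}$. (a) $SS_{i;\bar i}=SS_{i;\{m+1\}}$ as functions of $Y\in\mathbb R^n$ if and only if for every $j\in\{1,\dots,m\}\setminus\{i\}$ the incidence matrix $N_{ij}$ satisfies the proportional frequency condition $N_{ij}=r_ir_j'/n$. (b) Suppose $i\le m-1$. Then $SS_{i;\bar i}=SS_{i;\{m,m+1\}}$ as functions of $Y$ if and only if $N_{ij}=N_{im}R_m^{-1}N_{jm}'$ for every $j\in\{1,\dots,m-1\}\setminus\{i\}$.
   Context: Model: $Y=\mathbf 1_n\mu+\sum_{i=1}^m X_i\alpha^i+\epsilon$, where $F_i$ has $a_i$ levels and $X_i$ is the $n\times a_i$ 0-1 design matrix ($(u,t)$ entry $1$ iff $F_i$ is at level $t$ in run $u$); put $X_{m+1}=\mathbf 1_n$. $N_{ij}=X_i'X_j$ is the incidence matrix of $F_i,F_j$ (entry $(s,t)$ = number of runs with $F_i$ at level $s$ and $F_j$ at level $t$), $r_i=X_i'\mathbf 1_n$ is the replication vector of $F_i$, and $R_i=\mathrm{diag}(r_i)$. $P_A=A(A'A)^-A'$ is the orthogonal projector onto the column space of $A$; for $S\subseteq\{1,\dots,m+1\}$, $P_S$ is the projector onto the column space of $[X_j]_{j\in S}$. For $i\notin T$: $C_{i;T}=X_i'(I-P_T)X_i$, $Q_{i;T}=X_i'(I-P_T)Y$, $SS_{i;T}=Q_{i;T}'(C_{i;T})^-Q_{i;T}$.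 *)

theory Defs
  imports Main "Jordan_Normal_Form.Matrix"
begin

(* A generalized inverse M^- of M: any G with M G M = M (one exists, e.g. Moore-Penrose);
   all quantities below are invariant under the choice. *)
definition ginv :: "real mat \<Rightarrow> real mat" where
  "ginv M = (SOME G. G \<in> carrier_mat (dim_col M) (dim_row M) \<and> M * G * M = M)"

definition proj :: "real mat \<Rightarrow> real mat" where
  "proj A = A * ginv (transpose_mat A * A) * transpose_mat A"

(* Design matrices. n runs, m factors, factor j has a j levels (0..a j - 1),
   lev j u = level of factor j in run u.  X_j (1 <= j <= m) is the n x a_j 0-1 matrix,
   X_{m+1} is the all-ones column 1_n. *)
definition Xmat :: "nat \<Rightarrow> nat \<Rightarrow> (nat \<Rightarrow> nat) \<Rightarrow> (nat \<Rightarrow> nat \<Rightarrow> nat) \<Rightarrow> nat \<Rightarrow> real mat" where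
  "Xmat n m a lev j = (if j = Suc m then mat n 1 (\<lambda>_. 1)
     else mat n (a j) (\<lambda>(u,t). if lev j u = t then 1 else 0))"

definition Xblock :: "nat \<Rightarrow> nat \<Rightarrow> (nat \<Rightarrow> nat) \<Rightarrow> (nat \<Rightarrow> nat \<Rightarrow> nat) \<Rightarrow> nat set \<Rightarrow> real mat" where
  "Xblock n m a lev S = mat_of_cols n (concat (map (\<lambda>j. cols (Xmat n m a lev j)) (sorted_list_of_set S)))"

definition PS :: "nat \<Rightarrow> nat \<Rightarrow> (nat \<Rightarrow> nat) \<Rightarrow> (nat \<Rightarrow> nat \<Rightarrow> nat) \<Rightarrow> nat set \<Rightarrow> real mat" where
  "PS n m a lev S = proj (Xblock n m a lev S)"

definition Cmat :: "nat \<Rightarrow> nat \<Rightarrow> (nat \<Rightarrow> nat) \<Rightarrow> (nat \<Rightarrow> nat \<Rightarrow> nat) \<Rightarrow> nat \<Rightarrow> nat set \<Rightarrow> real mat" where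
  "Cmat n m a lev i T = transpose_mat (Xmat n m a lev i) * (1\<^sub>m n - PS n m a lev T) * Xmat n m a lev i"

definition Qvec :: "nat \<Rightarrow> nat \<Rightarrow> (nat \<Rightarrow> nat) \<Rightarrow> (nat \<Rightarrow> nat \<Rightarrow> nat) \<Rightarrow> nat \<Rightarrow> nat set \<Rightarrow> real vec \<Rightarrow> real vec" where
  "Qvec n m a lev i T Y = transpose_mat (Xmat n m a lev i) *\<^sub>v ((1\<^sub>m n - PS n m a lev T) *\<^sub>v Y)"

definition SS :: "nat \<Rightarrow> nat \<Rightarrow> (nat \<Rightarrow> nat) \<Rightarrow> (nat \<Rightarrow> nat \<Rightarrow> nat) \<Rightarrow> nat \<Rightarrow> nat set \<Rightarrow> real vec \<Rightarrow> real" where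
  "SS n m a lev i T Y = Qvec n m a lev i T Y \<bullet> (ginv (Cmat n m a lev i T) *\<^sub>v Qvec n m a lev i T Y)"

definition Nmat :: "nat \<Rightarrow> nat \<Rightarrow> (nat \<Rightarrow> nat) \<Rightarrow> (nat \<Rightarrow> nat \<Rightarrow> nat) \<Rightarrow> nat \<Rightarrow> nat \<Rightarrow> real mat" where
  "Nmat n m a lev i j = transpose_mat (Xmat n m a lev i) * Xmat n m a lev j"

definition rvec :: "nat \<Rightarrow> nat \<Rightarrow> (nat \<Rightarrow> nat) \<Rightarrow> (nat \<Rightarrow> nat \<Rightarrow> nat) \<Rightarrow> nat \<Rightarrow> real vec" where
  "rvec n m a lev i = transpose_mat (Xmat n m a lev i) *\<^sub>v vec n (\<lambda>_. 1)"

(* R_i^{-1} = diag(r_i)^{-1}  (all r_i entries are positive when every level occurs) *)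
definition Rinv :: "nat \<Rightarrow> nat \<Rightarrow> (nat \<Rightarrow> nat) \<Rightarrow> (nat \<Rightarrow> nat \<Rightarrow> nat) \<Rightarrow> nat \<Rightarrow> real mat" where
  "Rinv n m a lev i = mat (a i) (a i) (\<lambda>(s,t). if s = t then 1 / (rvec n m a lev i $ s) else 0)"

end

theory Submission
  imports Defs "Jordan_Normal_Form.Gauss_Jordan_Elimination"
begin

(* SS_{i;T}(Y) = Y' P Y for the orthogonal projector P onto the column space of (I - P_T) X_i.
   For T2 \<subseteq> T1 the projectors belonging to T1 and T2 coincide iff (I - P_T2) X_i is
   orthogonal to every X_j with j \<in> T1, which is automatic for j \<in> T2.  For T2 = {m+1} and
   T2 = {m, m+1} the projector P_T2 equals X D X' with X = 1_n resp. X = X_m and D the inverted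
   replication matrix, which turns these orthogonality conditions into the stated identities
   between incidence matrices. *)

lemma mat_mult_assoc:
  "dim_col A = dim_row B \<Longrightarrow> dim_col B = dim_row C \<Longrightarrow> A * B * C = A * (B * C)"
  by (rule assoc_mult_mat[of A "dim_row A" "dim_col A" B "dim_col B" C "dim_col C"]) auto

lemma mat_mult_vec_assoc:
  "dim_col A = dim_row B \<Longrightarrow> dim_col B = dim_vec v \<Longrightarrow> (A * B) *\<^sub>v v = A *\<^sub>v (B *\<^sub>v v)"
  by (rule assoc_mult_mat_vec[of A "dim_row A" "dim_col A" B "dim_col B"]) auto

lemma mat_mult_minus_distrib_left:
  fixes A :: "'a :: ring mat"
  shows "dim_col A = dim_row B \<Longrightarrow> dim_row B = dim_row C \<Longrightarrow> dim_col B = dim_col C \<Longrightarrow>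
    A * (B - C) = A * B - A * C"
  by (rule mult_minus_distrib_mat[of A "dim_row A" "dim_col A" B "dim_col B"]) auto

lemma mat_mult_minus_distrib_right:
  fixes A :: "'a :: ring mat"
  shows "dim_row A = dim_row B \<Longrightarrow> dim_col A = dim_col B \<Longrightarrow> dim_col A = dim_row C \<Longrightarrow>
    (A - B) * C = A * C - B * C"
  by (rule minus_mult_distrib_mat[of A "dim_row A" "dim_col A" B C "dim_col C"]) auto

lemma transpose_mat_mult:
  fixes A :: "'a :: comm_semiring_0 mat"
  shows "dim_col A = dim_row B \<Longrightarrow> transpose_mat (A * B) = transpose_mat B * transpose_mat A"
  by (rule transpose_mult[of A "dim_row A" "dim_col A" B "dim_col B"]) auto

lemma mat_minus_eq_0_iff:
  fixes A :: "'a :: ab_group_add mat"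
  shows "dim_row A = dim_row B \<Longrightarrow> dim_col A = dim_col B \<Longrightarrow>
    A - B = 0\<^sub>m (dim_row B) (dim_col B) \<longleftrightarrow> A = B"
  by (auto simp: mat_eq_iff)

lemma transpose_mult_eq_0_iff_cols:
  fixes A Z :: "'a :: comm_semiring_0 mat"
  assumes A: "A \<in> carrier_mat n k" and Z: "Z \<in> carrier_mat n l"
  shows "transpose_mat A * Z = 0\<^sub>m k l \<longleftrightarrow> (\<forall>v \<in> set (cols A). \<forall>u < l. v \<bullet> col Z u = 0)"
  using A Z by (auto simp: mat_eq_iff cols_def)

lemma transpose_mat_diag [simp]: "transpose_mat (mat_diag k d) = mat_diag k d"
  by (auto simp: mat_diag_def)

section \<open>Generalized inverses and orthogonal projectors\<close>

lemma pivot_fun_ginv_exists: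
  fixes R :: "'a :: field mat"
  assumes R: "R \<in> carrier_mat nr nc" and p: "pivot_fun R f nc"
  shows "\<exists>G \<in> carrier_mat nc nr. R * G * R = R"
proof -
  (* G maps every pivot row back to its pivot column, so R * G is the 0-1 diagonal of pivot rows *)
  define G where "G = mat nc nr (\<lambda>(j, l). if f l = j then 1 else (0 :: 'a))"
  have dR: "dim_row R = nr" using R by auto
  note pivot = pivot_funD[OF dR p]
  have RG: "(R * G) $$ (i, l) = (if l = i \<and> f i < nc then 1 else 0)" if i: "i < nr" and l: "l < nr" for i l
  proof -
    have "(R * G) $$ (i, l) = (\<Sum>j<nc. R $$ (i, j) * (if f l = j then 1 else 0))"
      using R i l by (simp add: G_def scalar_prod_def lessThan_atLeast0)
    also have "\<dots> = (if f l < nc then R $$ (i, f l) else 0)"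
      by (auto simp: if_distrib cong: if_cong)
    also have "\<dots> = (if l = i \<and> f i < nc then 1 else 0)"
      using pivot(4)[OF i] pivot(5)[OF l _ i] by auto
    finally show ?thesis .
  qed
  have "R * G * R = R"
  proof (rule eq_matI)
    fix i k assume i: "i < dim_row R" and k: "k < dim_col R"
    have "(R * G * R) $$ (i, k) = (\<Sum>l<nr. (R * G) $$ (i, l) * R $$ (l, k))"
      using R i k by (simp add: G_def scalar_prod_def lessThan_atLeast0)
    also have "\<dots> = (\<Sum>l<nr. if l = i then (if f i < nc then R $$ (i, k) else 0) else 0)"
      using i dR by (intro sum.cong) (auto simp: RG)
    also have "\<dots> = (if f i < nc then R $$ (i, k) else 0)"
      using i dR by simp
    also have "\<dots> = R $$ (i, k)"
      using pivot(1)[of i] pivot(2)[of i k] i k R by fastforce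
    finally show "(R * G * R) $$ (i, k) = R $$ (i, k)" .
  qed (use R in \<open>auto simp: G_def\<close>)
  then show ?thesis by (auto simp: G_def)
qed

lemma ginv_exists:
  fixes A :: "'a :: field mat"
  assumes A: "A \<in> carrier_mat nr nc"
  shows "\<exists>G \<in> carrier_mat nc nr. A * G * A = A"
proof -
  obtain C where gj: "gauss_jordan_single A = C" by simp
  note C = gauss_jordan_single[OF A gj]
  obtain f where p: "pivot_fun C f nc"
    using C(2,3) unfolding row_echelon_form_def by auto
  obtain P Q where PQ: "C = P * A" "P \<in> carrier_mat nr nr" "Q \<in> carrier_mat nr nr"
      "P * Q = 1\<^sub>m nr" "Q * P = 1\<^sub>m nr"
    using C(4) by auto
  obtain G where G: "G \<in> carrier_mat nc nr" "C * G * C = C"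
    using pivot_fun_ginv_exists[OF C(2) p] by auto
  have QC: "Q * C = A" using PQ A by (simp add: assoc_mult_mat[symmetric])
  have "A * (G * P) * A = Q * (C * G * (P * Q) * C)"
    unfolding QC[symmetric] using PQ(2,3) G(1) C(2) by (simp add: mat_mult_assoc)
  also have "\<dots> = A" using PQ(4) G C(2) QC by simp
  finally show ?thesis using G(1) PQ(2) by (intro bexI[of _ "G * P"]) auto
qed

lemma ginv_carrier: "ginv M \<in> carrier_mat (dim_col M) (dim_row M)"
  and ginv_mult: "M * ginv M * M = M"
proof -
  have "\<exists>G. G \<in> carrier_mat (dim_col M) (dim_row M) \<and> M * G * M = M"
    using ginv_exists[of M "dim_row M" "dim_col M"] by auto
  from someI_ex[OF this] show "ginv M \<in> carrier_mat (dim_col M) (dim_row M)" "M * ginv M * M = M"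
    unfolding ginv_def by auto
qed

lemma dim_ginv [simp]: "dim_row (ginv M) = dim_col M" "dim_col (ginv M) = dim_row M"
  using ginv_carrier[of M] by auto

lemma gram_eq_0_imp_eq_0:
  fixes E :: "real mat"
  assumes E: "E \<in> carrier_mat n k" and gram: "transpose_mat E * E = 0\<^sub>m k k"
  shows "E = 0\<^sub>m n k"
proof (rule eq_matI)
  fix u t assume u: "u < dim_row (0\<^sub>m n k)" and t: "t < dim_col (0\<^sub>m n k)"
  have "(\<Sum>v = 0..<n. (E $$ (v, t))\<^sup>2) = (transpose_mat E * E) $$ (t, t)"
    using E t by (simp add: scalar_prod_def power2_eq_square)
  also have "\<dots> = 0" using gram t by simp
  finally have "\<forall>v \<in> {0..<n}. (E $$ (v, t))\<^sup>2 = 0"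
    by (subst (asm) sum_nonneg_eq_0_iff) auto
  then show "E $$ (u, t) = 0\<^sub>m n k $$ (u, t)" using u t by simp
qed (use E in auto)

text \<open>The defect \<open>E = A H A'A - A\<close> satisfies \<open>A'E = 0\<close>, hence \<open>E'E = 0\<close>.\<close>

lemma gram_ginv_cancel:
  fixes A :: "real mat"
  assumes A: "A \<in> carrier_mat n k" and H: "H \<in> carrier_mat k k"
    and g: "transpose_mat A * A * H * (transpose_mat A * A) = transpose_mat A * A"
  shows "A * H * (transpose_mat A * A) = A"
proof -
  define E where "E = A * H * (transpose_mat A * A) - A"
  define F where "F = H * (transpose_mat A * A) - 1\<^sub>m k"
  have F: "F \<in> carrier_mat k k" using A H by (auto simp: F_def)
  note dims = carrier_matD[OF A] carrier_matD[OF H]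
  have EF: "E = A * F"
    unfolding E_def F_def using dims by (simp add: mat_mult_minus_distrib_left mat_mult_assoc)
  have "transpose_mat A * E = transpose_mat A * A * H * (transpose_mat A * A) - transpose_mat A * A"
    unfolding E_def using dims by (simp add: mat_mult_minus_distrib_left mat_mult_assoc)
  also have "\<dots> = 0\<^sub>m k k" unfolding g using A by (intro eq_matI) auto
  finally have AE: "transpose_mat A * E = 0\<^sub>m k k" .
  have E: "E \<in> carrier_mat n k" unfolding EF using A F by (rule mult_carrier_mat)
  have "transpose_mat E = transpose_mat F * transpose_mat A"
    unfolding EF using A F by (rule transpose_mult)
  then have "transpose_mat E * E = transpose_mat F * transpose_mat A * E" by simp
  also have "\<dots> = transpose_mat F * (transpose_mat A * E)"
    using A F E by (intro assoc_mult_mat) auto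
  also have "\<dots> = 0\<^sub>m k k" using AE F by simp
  finally have "E = 0\<^sub>m n k" by (rule gram_eq_0_imp_eq_0[OF E])
  then show ?thesis
    unfolding E_def using A H mat_minus_eq_0_iff[of "A * H * (transpose_mat A * A)" A] by auto
qed

lemma gram_transpose_ginv_mult:
  fixes A :: "real mat"
  assumes A: "A \<in> carrier_mat n k"
  defines "M \<equiv> transpose_mat A * A"
  shows "M * transpose_mat (ginv M) * M = M"
proof -
  have "M * transpose_mat (ginv M) * M = transpose_mat (M * ginv M * M)"
    using carrier_matD[OF A] by (simp add: M_def transpose_mat_mult mat_mult_assoc)
  also have "\<dots> = M" by (simp add: ginv_mult M_def transpose_mat_mult)
  finally show ?thesis .
qed

lemma proj_eq_gram_ginv:
  fixes A :: "real mat"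
  assumes A: "A \<in> carrier_mat n k" and H: "H \<in> carrier_mat k k"
    and g: "transpose_mat A * A * H * (transpose_mat A * A) = transpose_mat A * A"
  shows "proj A = A * H * transpose_mat A"
proof -
  let ?M = "transpose_mat A * A"
  define G where "G = ginv ?M"
  have G: "G \<in> carrier_mat k k" using A ginv_carrier[of ?M] by (simp add: G_def)
  have "A * transpose_mat G * ?M = A"
    using gram_ginv_cancel[OF A _ gram_transpose_ginv_mult[OF A]] G by (simp add: G_def)
  then have "transpose_mat (A * transpose_mat G * ?M) = transpose_mat A" by simp
  then have MGA: "?M * G * transpose_mat A = transpose_mat A"
    using carrier_matD[OF A] by (simp add: G_def transpose_mat_mult mat_mult_assoc)
  have "A * H * transpose_mat A = (A * H * ?M) * G * transpose_mat A"
    using carrier_matD[OF A] carrier_matD[OF H]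
    by (subst (1) MGA[symmetric]) (simp add: G_def mat_mult_assoc)
  also have "\<dots> = proj A"
    using gram_ginv_cancel[OF A H g] by (simp add: proj_def G_def)
  finally show ?thesis by simp
qed

lemma dim_proj [simp]: "dim_row (proj A) = dim_row A" "dim_col (proj A) = dim_row A"
  by (simp_all add: proj_def)

lemma proj_carrier: "A \<in> carrier_mat n k \<Longrightarrow> proj A \<in> carrier_mat n n"
  by (metis carrier_matD(1) carrier_matI dim_proj)

lemma proj_mult_self:
  fixes A :: "real mat"
  assumes A: "A \<in> carrier_mat n k"
  shows "proj A * A = A"
proof -
  let ?M = "transpose_mat A * A"
  have G: "ginv ?M \<in> carrier_mat k k" using A ginv_carrier[of ?M] by simp
  have "proj A * A = A * ginv ?M * ?M"
    unfolding proj_def using carrier_matD[OF A] by (simp add: mat_mult_assoc)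
  also have "\<dots> = A" using gram_ginv_cancel[OF A G ginv_mult] .
  finally show ?thesis .
qed

lemma proj_transpose:
  fixes A :: "real mat"
  assumes A: "A \<in> carrier_mat n k"
  shows "transpose_mat (proj A) = proj A"
proof -
  let ?G = "ginv (transpose_mat A * A)"
  have G: "?G \<in> carrier_mat k k" using A ginv_carrier[of "transpose_mat A * A"] by simp
  have "transpose_mat (proj A) = A * transpose_mat ?G * transpose_mat A"
    using carrier_matD[OF A] by (simp add: proj_def transpose_mat_mult mat_mult_assoc)
  also have "\<dots> = proj A"
    using proj_eq_gram_ginv[OF A _ gram_transpose_ginv_mult[OF A]] G by simp
  finally show ?thesis .
qed

lemma proj_idem:
  fixes A :: "real mat"
  assumes A: "A \<in> carrier_mat n k"
  shows "proj A * proj A = proj A"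
proof -
  let ?G = "ginv (transpose_mat A * A)"
  have "proj A * proj A = (proj A * A) * ?G * transpose_mat A"
    using carrier_matD[OF A] by (simp add: proj_def[of A] mat_mult_assoc)
  also have "\<dots> = proj A" unfolding proj_mult_self[OF A] by (simp add: proj_def)
  finally show ?thesis .
qed

lemma proj_mult_eq_if_cols_in_col_space:
  fixes A B :: "real mat"
  assumes A: "A \<in> carrier_mat n k" and B: "B \<in> carrier_mat n l"
    and col_space: "\<forall>v \<in> set (cols B). \<exists>c \<in> carrier_vec k. v = A *\<^sub>v c"
  shows "proj A * B = B"
proof (rule mat_col_eqI)
  fix t assume t: "t < dim_col B"
  then have "col B t \<in> set (cols B)" by (simp add: cols_def)
  then obtain c where c: "c \<in> carrier_vec k" "col B t = A *\<^sub>v c" using col_space by auto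
  have "col (proj A * B) t = proj A *\<^sub>v col B t"
    using proj_carrier[OF A] B by (rule col_mult2) (use t B in simp)
  also have "\<dots> = proj A *\<^sub>v (A *\<^sub>v c)" using c by simp
  also have "\<dots> = (proj A * A) *\<^sub>v c"
    using carrier_matD[OF A] c by (simp add: mat_mult_vec_assoc)
  finally show "col (proj A * B) t = col B t" using c by (simp add: proj_mult_self[OF A])
qed (use A B proj_carrier[OF A] in auto)

lemma cols_in_col_space:
  fixes A :: "'a :: semiring_1 mat"
  assumes A: "A \<in> carrier_mat n k" and v: "v \<in> set (cols A)"
  shows "\<exists>c \<in> carrier_vec k. v = A *\<^sub>v c"
proof -
  obtain s where s: "s < k" "v = col A s" using v A by (auto simp: cols_def)
  have "col A s = A *\<^sub>v unit_vec k s" using A s(1) by (intro eq_vecI) auto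
  then show ?thesis using s(2) unit_vec_carrier by metis
qed

lemma proj_mult_eq_if_cols_subset:
  fixes A B :: "real mat"
  assumes A: "A \<in> carrier_mat n k" and B: "B \<in> carrier_mat n l"
    and cols: "set (cols B) \<subseteq> set (cols A)"
  shows "proj A * B = B"
  using cols cols_in_col_space[OF A] by (intro proj_mult_eq_if_cols_in_col_space[OF A B]) blast

lemma proj_mult_proj_eq:
  fixes A B :: "real mat"
  assumes A: "A \<in> carrier_mat n k" and B: "B \<in> carrier_mat n l" and AB: "proj A * B = B"
  shows "proj A * proj B = proj B"
proof -
  let ?G = "ginv (transpose_mat B * B)"
  have "proj A * proj B = (proj A * B) * ?G * transpose_mat B"
    using carrier_matD[OF A] carrier_matD[OF B] by (simp add: proj_def[of B] mat_mult_assoc)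
  then show ?thesis unfolding AB by (simp add: proj_def)
qed

lemma proj_eqI:
  fixes A B :: "real mat"
  assumes A: "A \<in> carrier_mat n k" and B: "B \<in> carrier_mat n l"
    and AB: "proj A * B = B" and BA: "proj B * A = A"
  shows "proj A = proj B"
proof -
  have "proj A = transpose_mat (proj B * proj A)"
    using proj_mult_proj_eq[OF B A BA] proj_transpose[OF A] by simp
  also have "\<dots> = proj A * proj B"
    using carrier_matD[OF A] carrier_matD[OF B]
    by (simp add: transpose_mat_mult proj_transpose[OF A] proj_transpose[OF B])
  also have "\<dots> = proj B" using proj_mult_proj_eq[OF A B AB] .
  finally show ?thesis .
qed

lemma proj_eq_if_gram_diag:
  fixes A :: "real mat" and d :: "nat \<Rightarrow> real"
  assumes A: "A \<in> carrier_mat n k" and gram: "transpose_mat A * A = mat_diag k d"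
  shows "proj A = A * mat_diag k (\<lambda>s. 1 / d s) * transpose_mat A"
proof (rule proj_eq_gram_ginv[OF A mat_diag_dim])
  (* thanks to 1 / 0 = 0 this needs no positivity of d *)
  have "(\<lambda>s. d s * (1 / d s) * d s) = d" by (rule ext) (simp add: field_simps)
  then show "transpose_mat A * A * mat_diag k (\<lambda>s. 1 / d s) * (transpose_mat A * A) = transpose_mat A * A"
    by (simp only: gram mat_diag_diag)
qed

lemma gram_indicator_mat:
  fixes n k :: nat and f :: "nat \<Rightarrow> nat"
  defines "X \<equiv> mat n k (\<lambda>(u, t). if f u = t then 1 else 0) :: real mat"
  shows "transpose_mat X * X = mat_diag k (\<lambda>s. (transpose_mat X *\<^sub>v vec n (\<lambda>_. 1)) $ s)"
proof (rule eq_matI)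
  fix s t assume "s < dim_row (mat_diag k (\<lambda>s. (transpose_mat X *\<^sub>v vec n (\<lambda>_. 1)) $ s))"
    and "t < dim_col (mat_diag k (\<lambda>s. (transpose_mat X *\<^sub>v vec n (\<lambda>_. 1)) $ s))"
  then have st: "s < k" "t < k" by (simp_all add: mat_diag_def)
  have "(transpose_mat X * X) $$ (s, t)
      = (\<Sum>u = 0..<n. (if f u = s then 1 else 0) * (if f u = t then 1 else 0))"
    using st by (simp add: X_def scalar_prod_def)
  also have "\<dots> = (if s = t then (\<Sum>u = 0..<n. if f u = s then 1 else 0) else 0)"
    by (cases "s = t") (auto intro!: sum.neutral sum.cong)
  also have "\<dots> = mat_diag k (\<lambda>s. (transpose_mat X *\<^sub>v vec n (\<lambda>_. 1)) $ s) $$ (s, t)"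
    using st by (simp add: X_def mat_diag_def scalar_prod_def)
  finally show "(transpose_mat X * X) $$ (s, t) = \<dots>" .
qed (simp_all add: X_def mat_diag_def)

lemma transpose_mult_compl_mult_eq_0_iff:
  fixes A H Xi Xj :: "real mat"
  assumes A: "A \<in> carrier_mat n k" and H: "H \<in> carrier_mat k k"
    and Xi: "Xi \<in> carrier_mat n ki" and Xj: "Xj \<in> carrier_mat n kj"
  shows "transpose_mat Xj * (1\<^sub>m n - A * H * transpose_mat A) * Xi = 0\<^sub>m kj ki \<longleftrightarrow>
    transpose_mat Xi * Xj = transpose_mat Xi * A * transpose_mat H * transpose_mat (transpose_mat Xj * A)"
proof -
  let ?R = "transpose_mat Xj * A * H * (transpose_mat A * Xi)"
  note dims = carrier_matD[OF A] carrier_matD[OF H] carrier_matD[OF Xi] carrier_matD[OF Xj]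
  have "transpose_mat Xj * (1\<^sub>m n - A * H * transpose_mat A) * Xi = transpose_mat Xj * Xi - ?R"
    using dims by (simp add: mat_mult_minus_distrib_left mat_mult_minus_distrib_right mat_mult_assoc)
  then have "transpose_mat Xj * (1\<^sub>m n - A * H * transpose_mat A) * Xi = 0\<^sub>m kj ki \<longleftrightarrow>
      transpose_mat Xj * Xi = ?R"
    using dims mat_minus_eq_0_iff[of "transpose_mat Xj * Xi" ?R] by simp
  also have "\<dots> \<longleftrightarrow> transpose_mat (transpose_mat Xj * Xi) = transpose_mat ?R"
    by (metis transpose_transpose)
  also have "transpose_mat ?R = transpose_mat Xi * A * transpose_mat H * transpose_mat (transpose_mat Xj * A)"
    using dims by (simp add: transpose_mat_mult mat_mult_assoc)
  finally show ?thesis using dims by (simp add: transpose_mat_mult)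
qed

lemma compl_mult_eq:
  fixes P X :: "'a :: ring_1 mat"
  assumes "P \<in> carrier_mat n n" and "X \<in> carrier_mat n l"
  shows "(1\<^sub>m n - P) * X = X - P * X"
  using carrier_matD[OF assms(1)] carrier_matD[OF assms(2)]
  by (simp add: mat_mult_minus_distrib_right)

lemma transpose_compl_proj:
  fixes A :: "real mat"
  assumes A: "A \<in> carrier_mat n k"
  shows "transpose_mat (1\<^sub>m n - proj A) = 1\<^sub>m n - proj A"
  using transpose_minus[OF one_carrier_mat proj_carrier[OF A]] by (simp add: proj_transpose[OF A])

lemma compl_proj_idem:
  fixes A :: "real mat"
  assumes A: "A \<in> carrier_mat n k"
  shows "(1\<^sub>m n - proj A) * (1\<^sub>m n - proj A) = 1\<^sub>m n - proj A"
proof -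
  have P: "proj A \<in> carrier_mat n n" by (rule proj_carrier[OF A])
  have "proj A * (1\<^sub>m n - proj A) = proj A - proj A * proj A"
    using carrier_matD[OF P] by (simp add: mat_mult_minus_distrib_left)
  also have "\<dots> = 0\<^sub>m n n" using P by (simp add: proj_idem[OF A])
  finally have "proj A * (1\<^sub>m n - proj A) = 0\<^sub>m n n" .
  then show ?thesis
    using compl_mult_eq[OF P minus_carrier_mat[OF P]] P by (auto simp: mat_eq_iff)
qed

lemma gram_ginv_quadratic_form:
  fixes Z :: "real mat"
  assumes Z: "Z \<in> carrier_mat n k" and Y: "Y \<in> carrier_vec n"
  shows "(transpose_mat Z *\<^sub>v Y) \<bullet> (ginv (transpose_mat Z * Z) *\<^sub>v (transpose_mat Z *\<^sub>v Y))
    = Y \<bullet> (proj Z *\<^sub>v Y)"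
proof -
  let ?G = "ginv (transpose_mat Z * Z)"
  have G: "?G \<in> carrier_mat k k" using Z ginv_carrier[of "transpose_mat Z * Z"] by simp
  have ZtY: "transpose_mat Z *\<^sub>v Y \<in> carrier_vec k" using Z Y by simp
  have "(transpose_mat Z *\<^sub>v Y) \<bullet> (?G *\<^sub>v (transpose_mat Z *\<^sub>v Y))
      = Y \<bullet> (Z *\<^sub>v (?G *\<^sub>v (transpose_mat Z *\<^sub>v Y)))"
    using G ZtY by (intro transpose_vec_mult_scalar[OF Z _ Y]) simp
  also have "Z *\<^sub>v (?G *\<^sub>v (transpose_mat Z *\<^sub>v Y)) = (Z * ?G) *\<^sub>v (transpose_mat Z *\<^sub>v Y)"
    by (rule assoc_mult_mat_vec[OF Z G ZtY, symmetric])
  also have "\<dots> = proj Z *\<^sub>v Y"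
    unfolding proj_def using Z by (intro assoc_mult_mat_vec[OF mult_carrier_mat[OF Z G] _ Y, symmetric]) simp
  finally show ?thesis .
qed

lemma unit_vec_pair_quadratic_form:
  fixes M :: "real mat"
  assumes M: "M \<in> carrier_mat n n" and s: "s < n" and t: "t < n"
  defines "e \<equiv> unit_vec n s + unit_vec n t"
  shows "e \<bullet> (M *\<^sub>v e) = M $$ (s, s) + M $$ (s, t) + M $$ (t, s) + M $$ (t, t)"
  using M s t unfolding e_def
  by (simp add: mult_add_distrib_mat_vec[OF M] add_scalar_prod_distrib[of _ n]
      scalar_prod_add_distrib[of _ n])

lemma sym_mat_eq_if_quadratic_forms_eq:
  fixes P Q :: "real mat"
  assumes P: "P \<in> carrier_mat n n" and Q: "Q \<in> carrier_mat n n"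
    and sym: "transpose_mat P = P" "transpose_mat Q = Q"
    and quad: "\<And>Y. Y \<in> carrier_vec n \<Longrightarrow> Y \<bullet> (P *\<^sub>v Y) = Y \<bullet> (Q *\<^sub>v Y)"
  shows "P = Q"
proof (rule eq_matI)
  fix s t assume "s < dim_row Q" "t < dim_col Q"
  then have s: "s < n" and t: "t < n" using Q by auto
  have diag: "M $$ (u, u) = unit_vec n u \<bullet> (M *\<^sub>v unit_vec n u)" if "M \<in> carrier_mat n n" "u < n"
    for M :: "real mat" and u
    using that by simp
  have "P $$ (t, s) = P $$ (s, t)" "Q $$ (t, s) = Q $$ (s, t)"
    using sym s t P Q by (metis carrier_matD index_transpose_mat(1))+
  moreover have "P $$ (s, s) = Q $$ (s, s)" "P $$ (t, t) = Q $$ (t, t)"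
    using quad[of "unit_vec n s"] quad[of "unit_vec n t"] diag[OF P] diag[OF Q] s t by auto
  moreover have "P $$ (s, s) + P $$ (s, t) + P $$ (t, s) + P $$ (t, t)
      = Q $$ (s, s) + Q $$ (s, t) + Q $$ (t, s) + Q $$ (t, t)"
    using quad[of "unit_vec n s + unit_vec n t"] s t
    by (simp add: unit_vec_pair_quadratic_form[OF P s t, symmetric]
        unit_vec_pair_quadratic_form[OF Q s t, symmetric])
  ultimately show "P $$ (s, t) = Q $$ (s, t)" by simp
qed (use P Q in auto)

lemma transpose_mult_compl_proj_mult:
  fixes B X :: "real mat"
  assumes B: "B \<in> carrier_mat n k" and X: "X \<in> carrier_mat n l"
  shows "transpose_mat B * ((1\<^sub>m n - proj B) * X) = 0\<^sub>m k l"
proof -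
  have P: "proj B \<in> carrier_mat n n" by (rule proj_carrier[OF B])
  have "transpose_mat B * proj B = transpose_mat (proj B * B)"
    using carrier_matD[OF B] by (simp add: transpose_mat_mult proj_transpose[OF B])
  then have BP: "transpose_mat B * proj B = transpose_mat B"
    by (simp add: proj_mult_self[OF B])
  have "transpose_mat B * ((1\<^sub>m n - proj B) * X) = transpose_mat B * X - transpose_mat B * proj B * X"
    unfolding compl_mult_eq[OF P X] using carrier_matD[OF B] carrier_matD[OF X]
    by (simp add: mat_mult_minus_distrib_left mat_mult_assoc)
  then show ?thesis using B X by (auto simp: BP mat_eq_iff)
qed

lemma compl_proj_mult_eq_if_orth:
  fixes B1 B2 X :: "real mat"
  assumes B1: "B1 \<in> carrier_mat n k1" and B2: "B2 \<in> carrier_mat n k2" and X: "X \<in> carrier_mat n l"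
    and nested: "proj B1 * B2 = B2"
    and orth: "transpose_mat B1 * ((1\<^sub>m n - proj B2) * X) = 0\<^sub>m k1 l"
  shows "(1\<^sub>m n - proj B1) * X = (1\<^sub>m n - proj B2) * X"
proof -
  define P1 where "P1 = proj B1"
  define P2 where "P2 = proj B2"
  have P1: "P1 \<in> carrier_mat n n" and P2: "P2 \<in> carrier_mat n n"
    using proj_carrier[OF B1] proj_carrier[OF B2] by (simp_all add: P1_def P2_def)
  have "P1 * ((1\<^sub>m n - P2) * X) = B1 * ginv (transpose_mat B1 * B1) * (transpose_mat B1 * ((1\<^sub>m n - P2) * X))"
    unfolding P1_def proj_def using carrier_matD[OF B1] carrier_matD[OF X] carrier_matD[OF P2]
    by (simp add: mat_mult_assoc)
  also have "\<dots> = 0\<^sub>m n l" using carrier_matD[OF B1] by (simp add: orth P2_def)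
  finally have P1_Z2: "P1 * ((1\<^sub>m n - P2) * X) = 0\<^sub>m n l" .
  have "P1 * (P2 * X) = (P1 * P2) * X" by (rule assoc_mult_mat[OF P1 P2 X, symmetric])
  also have "\<dots> = P2 * X"
    using proj_mult_proj_eq[OF B1 B2 nested] by (simp add: P1_def P2_def)
  finally have "P1 * ((1\<^sub>m n - P2) * X) = P1 * X - P2 * X"
    unfolding compl_mult_eq[OF P2 X] using carrier_matD[OF P1] carrier_matD[OF P2] carrier_matD[OF X]
    by (simp add: mat_mult_minus_distrib_left)
  then have "P1 * X = P2 * X"
    using P1_Z2 P1 P2 X mat_minus_eq_0_iff[of "P1 * X" "P2 * X"] by simp
  then show ?thesis
    using compl_mult_eq[OF P1 X] compl_mult_eq[OF P2 X] by (simp add: P1_def P2_def)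
qed

text \<open>If the projections agree, \<open>(I - P\<^sub>2) X\<close> lies in the column space of
  \<open>(I - P\<^sub>1) X\<close>, which is orthogonal to \<open>B\<^sub>1\<close>.\<close>

lemma proj_compl_mult_eq_iff:
  fixes B1 B2 X :: "real mat"
  assumes B1: "B1 \<in> carrier_mat n k1" and B2: "B2 \<in> carrier_mat n k2" and X: "X \<in> carrier_mat n l"
    and nested: "proj B1 * B2 = B2"
  defines "Z1 \<equiv> (1\<^sub>m n - proj B1) * X" and "Z2 \<equiv> (1\<^sub>m n - proj B2) * X"
  shows "proj Z1 = proj Z2 \<longleftrightarrow> transpose_mat B1 * Z2 = 0\<^sub>m k1 l"
proof
  have Z1: "Z1 \<in> carrier_mat n l" and Z2: "Z2 \<in> carrier_mat n l"
    unfolding Z1_def Z2_def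
    by (rule mult_carrier_mat[OF minus_carrier_mat[OF proj_carrier[OF B1]] X],
        rule mult_carrier_mat[OF minus_carrier_mat[OF proj_carrier[OF B2]] X])
  assume eq: "proj Z1 = proj Z2"
  define G where "G = ginv (transpose_mat Z1 * Z1)"
  have "Z2 = proj Z1 * Z2" using proj_mult_self[OF Z2] eq by simp
  also have "\<dots> = Z1 * (G * (transpose_mat Z1 * Z2))"
    unfolding proj_def G_def using carrier_matD[OF Z1] carrier_matD[OF Z2]
    by (simp add: mat_mult_assoc)
  finally have "transpose_mat B1 * Z2 = (transpose_mat B1 * Z1) * (G * (transpose_mat Z1 * Z2))"
    using carrier_matD[OF B1] carrier_matD[OF Z1] carrier_matD[OF Z2]
    by (simp add: G_def mat_mult_assoc)
  then show "transpose_mat B1 * Z2 = 0\<^sub>m k1 l"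
    using carrier_matD[OF Z1] carrier_matD[OF Z2]
    by (simp add: G_def Z1_def transpose_mult_compl_proj_mult[OF B1 X])
next
  assume "transpose_mat B1 * Z2 = 0\<^sub>m k1 l"
  then show "proj Z1 = proj Z2"
    unfolding Z1_def Z2_def using compl_proj_mult_eq_if_orth[OF B1 B2 X nested] by simp
qed

section \<open>Sums of squares in main effect plans\<close>

lemma dim_row_Xmat [simp]: "dim_row (Xmat n m a lev j) = n"
  by (simp add: Xmat_def)

lemma dim_col_Xmat: "dim_col (Xmat n m a lev j) = (if j = Suc m then 1 else a j)"
  by (simp add: Xmat_def)

lemma Xmat_carrier: "Xmat n m a lev j \<in> carrier_mat n (dim_col (Xmat n m a lev j))"
  by (rule carrier_matI) simp_all

lemma dim_row_Xblock [simp]: "dim_row (Xblock n m a lev T) = n"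
  by (simp add: Xblock_def)

lemma Xblock_carrier: "Xblock n m a lev T \<in> carrier_mat n (dim_col (Xblock n m a lev T))"
  by (rule carrier_matI) simp_all

lemma set_cols_Xblock:
  assumes "finite T"
  shows "set (cols (Xblock n m a lev T)) = (\<Union>j \<in> T. set (cols (Xmat n m a lev j)))"
proof -
  have "set (concat (map (\<lambda>j. cols (Xmat n m a lev j)) (sorted_list_of_set T))) \<subseteq> carrier_vec n"
    using cols_dim[of "Xmat n m a lev _"] by auto
  then show ?thesis using assms by (simp add: Xblock_def)
qed

lemma Xblock_singleton: "Xblock n m a lev {j} = Xmat n m a lev j"
  using mat_of_cols_cols[of "Xmat n m a lev j"] by (simp add: Xblock_def)

lemma Xblock_transpose_mult_eq_0_iff:
  assumes T: "finite T" and Z: "Z \<in> carrier_mat n l"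
  shows "transpose_mat (Xblock n m a lev T) * Z = 0\<^sub>m (dim_col (Xblock n m a lev T)) l \<longleftrightarrow>
    (\<forall>j \<in> T. transpose_mat (Xmat n m a lev j) * Z = 0\<^sub>m (dim_col (Xmat n m a lev j)) l)"
  by (simp add: transpose_mult_eq_0_iff_cols[OF Xblock_carrier Z]
      transpose_mult_eq_0_iff_cols[OF Xmat_carrier Z] set_cols_Xblock[OF T])

lemma PS_carrier: "PS n m a lev T \<in> carrier_mat n n"
  unfolding PS_def by (rule proj_carrier[OF Xblock_carrier])

lemma PS_mult_Xblock:
  assumes "finite T1" and "T2 \<subseteq> T1"
  shows "PS n m a lev T1 * Xblock n m a lev T2 = Xblock n m a lev T2"
  unfolding PS_def
  by (rule proj_mult_eq_if_cols_subset[OF Xblock_carrier Xblock_carrier])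
    (use assms finite_subset[OF assms(2,1)] in \<open>auto simp: set_cols_Xblock\<close>)

lemma PS_mult_Xmat:
  assumes "finite T" and "j \<in> T"
  shows "PS n m a lev T * Xmat n m a lev j = Xmat n m a lev j"
  using PS_mult_Xblock[of T "{j}"] assms by (simp add: Xblock_singleton)

lemma Xmat_transpose_mult_compl_PS:
  assumes T: "finite T" "j \<in> T" and X: "X \<in> carrier_mat n l"
  shows "transpose_mat (Xmat n m a lev j) * (1\<^sub>m n - PS n m a lev T) * X
    = 0\<^sub>m (dim_col (Xmat n m a lev j)) l"
proof -
  let ?Xj = "Xmat n m a lev j" and ?W = "1\<^sub>m n - PS n m a lev T"
  have W: "?W \<in> carrier_mat n n" by (rule minus_carrier_mat[OF PS_carrier])
  have "?W * ?Xj = ?Xj - ?Xj"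
    using compl_mult_eq[OF PS_carrier Xmat_carrier, of n m a lev T] PS_mult_Xmat[OF T] by simp
  then have "?W * ?Xj = 0\<^sub>m n (dim_col ?Xj)" using Xmat_carrier by simp
  then have "transpose_mat (?W * ?Xj) = 0\<^sub>m (dim_col ?Xj) n" by simp
  then have "transpose_mat ?Xj * ?W = 0\<^sub>m (dim_col ?Xj) n"
    using transpose_mult[OF W Xmat_carrier] transpose_compl_proj[OF Xblock_carrier]
    by (simp add: PS_def)
  then show ?thesis using X by simp
qed

lemma SS_eq_quadratic_form:
  assumes Y: "Y \<in> carrier_vec n"
  shows "SS n m a lev i T Y = Y \<bullet> (proj ((1\<^sub>m n - PS n m a lev T) * Xmat n m a lev i) *\<^sub>v Y)"
proof -
  let ?X = "Xmat n m a lev i" and ?W = "1\<^sub>m n - PS n m a lev T"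
  let ?Z = "?W * ?X"
  have W: "?W \<in> carrier_mat n n" by (rule minus_carrier_mat[OF PS_carrier])
  have Wt: "transpose_mat ?W = ?W"
    unfolding PS_def by (rule transpose_compl_proj[OF Xblock_carrier])
  have WW: "?W * ?W = ?W"
    unfolding PS_def by (rule compl_proj_idem[OF Xblock_carrier])
  have Zt: "transpose_mat ?Z = transpose_mat ?X * ?W"
    using transpose_mult[OF W Xmat_carrier] Wt by simp
  have "Qvec n m a lev i T Y = transpose_mat ?Z *\<^sub>v Y"
    unfolding Qvec_def Zt using carrier_matD[OF W] carrier_vecD[OF Y] by (simp add: mat_mult_vec_assoc)
  moreover have "Cmat n m a lev i T = transpose_mat ?Z * ?Z"
  proof -
    have "transpose_mat ?Z * ?Z = transpose_mat ?X * (?W * ?W) * ?X"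
      unfolding Zt using carrier_matD[OF W] by (simp add: mat_mult_assoc)
    then show ?thesis by (simp add: Cmat_def WW)
  qed
  ultimately show ?thesis
    unfolding SS_def using gram_ginv_quadratic_form[OF mult_carrier_mat[OF W Xmat_carrier] Y] by simp
qed

lemma SS_eq_SS_iff:
  assumes T1: "finite T1" and T2: "T2 \<subseteq> T1"
  shows "(\<forall>Y \<in> carrier_vec n. SS n m a lev i T1 Y = SS n m a lev i T2 Y) \<longleftrightarrow>
    (\<forall>j \<in> T1 - T2. transpose_mat (Xmat n m a lev j) * (1\<^sub>m n - PS n m a lev T2) * Xmat n m a lev i
       = 0\<^sub>m (dim_col (Xmat n m a lev j)) (dim_col (Xmat n m a lev i)))"
proof -
  let ?X = "Xmat n m a lev" and ?B = "Xblock n m a lev"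
  let ?Z1 = "(1\<^sub>m n - proj (?B T1)) * ?X i" and ?Z2 = "(1\<^sub>m n - proj (?B T2)) * ?X i"
  let ?l = "dim_col (?X i)"
  have Z: "?Z1 \<in> carrier_mat n ?l" "?Z2 \<in> carrier_mat n ?l"
    using minus_carrier_mat[OF proj_carrier[OF Xblock_carrier], of "1\<^sub>m n"] Xmat_carrier by auto
  have "(\<forall>Y \<in> carrier_vec n. SS n m a lev i T1 Y = SS n m a lev i T2 Y) \<longleftrightarrow> proj ?Z1 = proj ?Z2"
    using sym_mat_eq_if_quadratic_forms_eq[OF proj_carrier[OF Z(1)] proj_carrier[OF Z(2)]
        proj_transpose[OF Z(1)] proj_transpose[OF Z(2)]]
    by (auto simp: SS_eq_quadratic_form PS_def)
  also have "\<dots> \<longleftrightarrow> transpose_mat (?B T1) * ?Z2 = 0\<^sub>m (dim_col (?B T1)) ?l"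
    using PS_mult_Xblock[OF T1 T2] unfolding PS_def
    by (rule proj_compl_mult_eq_iff[OF Xblock_carrier Xblock_carrier Xmat_carrier])
  also have "\<dots> \<longleftrightarrow> (\<forall>j \<in> T1. transpose_mat (?X j) * ?Z2 = 0\<^sub>m (dim_col (?X j)) ?l)"
    by (rule Xblock_transpose_mult_eq_0_iff[OF T1 Z(2)])
  also have "\<dots> \<longleftrightarrow> (\<forall>j \<in> T1 - T2. transpose_mat (?X j) * (1\<^sub>m n - PS n m a lev T2) * ?X i
       = 0\<^sub>m (dim_col (?X j)) ?l)"
  proof -
    have assoc: "transpose_mat (?X j) * ?Z2 = transpose_mat (?X j) * (1\<^sub>m n - PS n m a lev T2) * ?X i" for j
      unfolding PS_def by (rule assoc_mult_mat[symmetric]) (use Xmat_carrier Z in auto)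
    show ?thesis
      using Xmat_transpose_mult_compl_PS[OF finite_subset[OF T2 T1] _ Xmat_carrier] T2
      unfolding assoc by blast
  qed
  finally show ?thesis .
qed

lemma Xmat_Suc: "Xmat n m a lev (Suc m) = mat n 1 (\<lambda>_. 1)"
  by (simp add: Xmat_def)

lemma Xmat_level: "j \<noteq> Suc m \<Longrightarrow> Xmat n m a lev j = mat n (a j) (\<lambda>(u, t). if lev j u = t then 1 else 0)"
  by (simp add: Xmat_def)

lemma Rinv_eq_mat_diag: "Rinv n m a lev j = mat_diag (a j) (\<lambda>s. 1 / rvec n m a lev j $ s)"
  by (auto simp: Rinv_def mat_diag_def)

lemma PS_Suc:
  "PS n m a lev {Suc m} = Xmat n m a lev (Suc m) * mat_diag 1 (\<lambda>_. 1 / real n)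
     * transpose_mat (Xmat n m a lev (Suc m))"
proof -
  have X: "Xmat n m a lev (Suc m) \<in> carrier_mat n 1" by (simp add: Xmat_Suc)
  have "transpose_mat (Xmat n m a lev (Suc m)) * Xmat n m a lev (Suc m) = mat_diag 1 (\<lambda>_. real n)"
    by (rule eq_matI) (auto simp: Xmat_Suc mat_diag_def scalar_prod_def)
  then show ?thesis
    unfolding PS_def Xblock_singleton by (rule proj_eq_if_gram_diag[OF X])
qed

lemma PS_m_Suc:
  assumes lev_m: "\<forall>u<n. lev m u < a m"
  shows "PS n m a lev {m, Suc m} = Xmat n m a lev m * Rinv n m a lev m * transpose_mat (Xmat n m a lev m)"
proof -
  let ?Xm = "Xmat n m a lev m" and ?B = "Xblock n m a lev {m, Suc m}"
  have Xm: "?Xm \<in> carrier_mat n (a m)" by (simp add: Xmat_def)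
  have "vec n (\<lambda>_. 1) = ?Xm *\<^sub>v vec (a m) (\<lambda>_. 1)"
  proof (rule eq_vecI)
    fix u assume "u < dim_vec (?Xm *\<^sub>v vec (a m) (\<lambda>_. 1))"
    then have u: "u < n" using Xm by simp
    have "(?Xm *\<^sub>v vec (a m) (\<lambda>_. 1)) $ u = (\<Sum>t = 0..<a m. if lev m u = t then 1 else 0)"
      using u by (simp add: Xmat_level scalar_prod_def)
    also have "\<dots> = 1" using lev_m u by simp
    finally show "vec n (\<lambda>_. 1) $ u = (?Xm *\<^sub>v vec (a m) (\<lambda>_. 1)) $ u" using u by simp
  qed (use Xm in simp)
  moreover have "set (cols (mat n 1 (\<lambda>_. 1))) = {vec n (\<lambda>_. 1 :: real)}"
    by (auto simp: cols_def)
  then have "set (cols ?B) = set (cols ?Xm) \<union> {vec n (\<lambda>_. 1)}"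
    using set_cols_Xblock[of "{m, Suc m}" n m a lev] by (simp add: Xmat_Suc)
  ultimately have "\<forall>v \<in> set (cols ?B). \<exists>c \<in> carrier_vec (a m). v = ?Xm *\<^sub>v c"
    using cols_in_col_space[OF Xm] by auto
  then have "PS n m a lev {m, Suc m} = proj ?Xm"
    unfolding PS_def
    by (intro proj_eqI[OF Xblock_carrier Xm] proj_mult_eq_if_cols_in_col_space[OF Xm Xblock_carrier]
        PS_mult_Xmat[of "{m, Suc m}" m, unfolded PS_def]) simp_all
  also have "\<dots> = ?Xm * Rinv n m a lev m * transpose_mat ?Xm"
    unfolding Rinv_eq_mat_diag
    by (rule proj_eq_if_gram_diag[OF Xm]) (simp add: Xmat_level gram_indicator_mat rvec_def)
  finally show ?thesis .
qed

lemma Xmat_transpose_mult_Suc: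
  "transpose_mat (Xmat n m a lev j) * Xmat n m a lev (Suc m)
     = mat (dim_col (Xmat n m a lev j)) 1 (\<lambda>(s, _). rvec n m a lev j $ s)"
  by (rule eq_matI) (auto simp: Xmat_Suc rvec_def)

lemma compl_PS_Suc_orth_iff:
  assumes i: "i \<noteq> Suc m" and j: "j \<noteq> Suc m"
  shows "transpose_mat (Xmat n m a lev j) * (1\<^sub>m n - PS n m a lev {Suc m}) * Xmat n m a lev i
      = 0\<^sub>m (a j) (a i) \<longleftrightarrow>
    Nmat n m a lev i j = mat (a i) (a j) (\<lambda>(s, t). rvec n m a lev i $ s * rvec n m a lev j $ t / real n)"
proof -
  let ?X = "Xmat n m a lev" and ?D = "mat_diag 1 (\<lambda>_. 1 / real n)"
  have X: "?X (Suc m) \<in> carrier_mat n 1" "?X i \<in> carrier_mat n (a i)" "?X j \<in> carrier_mat n (a j)"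
    using i j by (simp_all add: Xmat_def)
  have "transpose_mat (?X i) * ?X (Suc m) * transpose_mat ?D * transpose_mat (transpose_mat (?X j) * ?X (Suc m))
      = mat (a i) (a j) (\<lambda>(s, t). rvec n m a lev i $ s * rvec n m a lev j $ t / real n)"
    using i j
    by (intro eq_matI) (auto simp: Xmat_transpose_mult_Suc dim_col_Xmat mat_diag_def scalar_prod_def)
  then show ?thesis
    unfolding PS_Suc Nmat_def by (subst transpose_mult_compl_mult_eq_0_iff[OF X(1) _ X(2,3)]) simp_all
qed

lemma compl_PS_m_Suc_orth_iff:
  assumes lev_m: "\<forall>u<n. lev m u < a m" and i: "i \<noteq> Suc m" and j: "j \<noteq> Suc m"
  shows "transpose_mat (Xmat n m a lev j) * (1\<^sub>m n - PS n m a lev {m, Suc m}) * Xmat n m a lev i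
      = 0\<^sub>m (a j) (a i) \<longleftrightarrow>
    Nmat n m a lev i j = Nmat n m a lev i m * Rinv n m a lev m * transpose_mat (Nmat n m a lev j m)"
proof -
  let ?X = "Xmat n m a lev"
  have X: "?X m \<in> carrier_mat n (a m)" "?X i \<in> carrier_mat n (a i)" "?X j \<in> carrier_mat n (a j)"
    using i j by (simp_all add: Xmat_def)
  show ?thesis
    unfolding PS_m_Suc[of n lev m a, OF lev_m] Nmat_def
    using transpose_mult_compl_mult_eq_0_iff[OF X(1) _ X(2,3), of "Rinv n m a lev m"]
    by (simp add: Rinv_eq_mat_diag)
qed

lemma SS_adjusted_eq_unadjusted_iff:
  assumes i_range: "i \<in> {1..m}"
  shows "(\<forall>Y\<in>carrier_vec n. SS n m a lev i ({1..m+1} - {i}) Y = SS n m a lev i {m+1} Y)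
    \<longleftrightarrow> (\<forall>j\<in>{1..m} - {i}. Nmat n m a lev i j =
          mat (a i) (a j) (\<lambda>(s,t). rvec n m a lev i $ s * rvec n m a lev j $ t / real n))"
proof -
  let ?X = "Xmat n m a lev"
  have i: "i \<noteq> Suc m" using i_range by auto
  have sub: "{m+1} \<subseteq> {1..m+1} - {i}" and "({1..m+1} - {i}) - {m+1} = {1..m} - {i}"
    using i_range by auto
  then have "(\<forall>Y\<in>carrier_vec n. SS n m a lev i ({1..m+1} - {i}) Y = SS n m a lev i {m+1} Y) \<longleftrightarrow>
      (\<forall>j\<in>{1..m} - {i}. transpose_mat (?X j) * (1\<^sub>m n - PS n m a lev {Suc m}) * ?X i
         = 0\<^sub>m (dim_col (?X j)) (dim_col (?X i)))"
    using SS_eq_SS_iff[OF _ sub] by simp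
  also have "\<dots> \<longleftrightarrow> (\<forall>j\<in>{1..m} - {i}. Nmat n m a lev i j =
      mat (a i) (a j) (\<lambda>(s,t). rvec n m a lev i $ s * rvec n m a lev j $ t / real n))"
    using i by (intro ball_cong refl) (auto simp: dim_col_Xmat compl_PS_Suc_orth_iff)
  finally show ?thesis .
qed

lemma SS_adjusted_eq_adjusted_for_last_iff:
  assumes i_range: "i \<in> {1..m-1}" and lev_m: "\<forall>u<n. lev m u < a m"
  shows "(\<forall>Y\<in>carrier_vec n. SS n m a lev i ({1..m+1} - {i}) Y = SS n m a lev i {m, m+1} Y)
    \<longleftrightarrow> (\<forall>j\<in>{1..m-1} - {i}. Nmat n m a lev i j =
          Nmat n m a lev i m * Rinv n m a lev m * transpose_mat (Nmat n m a lev j m))"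
proof -
  let ?X = "Xmat n m a lev"
  have i: "i \<noteq> Suc m" using i_range by auto
  have sub: "{m, m+1} \<subseteq> {1..m+1} - {i}" and "({1..m+1} - {i}) - {m, m+1} = {1..m-1} - {i}"
    using i_range by auto
  then have "(\<forall>Y\<in>carrier_vec n. SS n m a lev i ({1..m+1} - {i}) Y = SS n m a lev i {m, m+1} Y) \<longleftrightarrow>
      (\<forall>j\<in>{1..m-1} - {i}. transpose_mat (?X j) * (1\<^sub>m n - PS n m a lev {m, Suc m}) * ?X i
         = 0\<^sub>m (dim_col (?X j)) (dim_col (?X i)))"
    using SS_eq_SS_iff[OF _ sub] by simp
  also have "\<dots> \<longleftrightarrow> (\<forall>j\<in>{1..m-1} - {i}. Nmat n m a lev i j =
      Nmat n m a lev i m * Rinv n m a lev m * transpose_mat (Nmat n m a lev j m))"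
    using i lev_m by (intro ball_cong refl) (auto simp: dim_col_Xmat compl_PS_m_Suc_orth_iff)
  finally show ?thesis .
qed

theorem theorem4p4:
  fixes n m :: nat and a :: "nat \<Rightarrow> nat" and lev :: "nat \<Rightarrow> nat \<Rightarrow> nat" and i :: nat
  assumes m3: "m \<ge> 3"
    and lev_range: "\<forall>j\<in>{1..m}. \<forall>u<n. lev j u < a j"
    and all_levels: "\<forall>j\<in>{1..m}. \<forall>t<a j. \<exists>u<n. lev j u = t"
    and i_range: "i \<in> {1..m}"
  shows "((\<forall>Y\<in>carrier_vec n. SS n m a lev i ({1..m+1} - {i}) Y = SS n m a lev i {m+1} Y)
           \<longleftrightarrow> (\<forall>j\<in>{1..m} - {i}. Nmat n m a lev i j =
                 mat (a i) (a j) (\<lambda>(s,t). rvec n m a lev i $ s * rvec n m a lev j $ t / real n)))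
       \<and> (i \<le> m - 1 \<longrightarrow>
          ((\<forall>Y\<in>carrier_vec n. SS n m a lev i ({1..m+1} - {i}) Y = SS n m a lev i {m, m+1} Y)
           \<longleftrightarrow> (\<forall>j\<in>{1..m-1} - {i}. Nmat n m a lev i j =
                 Nmat n m a lev i m * Rinv n m a lev m * transpose_mat (Nmat n m a lev j m))))"
proof -
  have "\<forall>u<n. lev m u < a m" using lev_range m3 by auto
  then show ?thesis
    using SS_adjusted_eq_unadjusted_iff[OF i_range] SS_adjusted_eq_adjusted_for_last_iff i_range m3
    by auto
qed

end
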